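(* Let $\{\omega_n:n\in\mathbb{N}_0\}$ and $\{\tilde\omega_n:n\in\mathbb{N}_0\}$ be the biorthogonal wavelet packets (defined in the context) associated with a pair of biorthogonal scaling functions $\omega_0=\varphi$ and $\tilde\omega_0=\tilde\varphi$. Then $$\langle\omega_{qr+s_1}(\cdot),\tilde\omega_{qr+s_2}(\cdot-u(k))\rangle=\delta_{0,k}\,\delta_{s_1,s_2}\quad\text{for all }0\le s_1,s_2\le q-1,\ r,k\in\mathbb{N}_0.$$
   Context: $K$ is a local field of positive characteristic $p$ with ring of integers $\mathfrak{D}=\{|x|\le1\}$, prime ideal $\mathfrak{B}=\mathfrak{p}\mathfrak{D}$ ($\mathfrak{p}$ a prime element), $q=|\mathfrak{D}/\mathfrak{B}|=p^c$, Haar measure normalized with $\mathfrak{D}$ of measure $1$. Choose $\zeta_0=1,\zeta_1,\dots,\zeta_{c-1}\in\mathfrak{D}$ with $|\zeta_j|=1$ whose images form a basis of $\mathfrak{D}/\mathfrak{B}\cong GF(q)$ over $GF(p)$; for $0\le n<q$, $n=a_0+a_1p+\dots+a_{c-1}p^{c-1}$ ($0\le a_k<p$), put $u(n)=(a_0+a_1\zeta_1+\dots+a_{c-1}\zeta_{c-1})\mathfrak{p}^{-1}$, and for $n=b_0+b_1q+\dots+b_sq^s$ ($0\le b_k<q$), $u(n)=u(b_0)+u(b_1)\mathfrak{p}^{-1}+\dots+u(b_s)\mathfrak{p}^{-s}$. $\chi$ is a character of $(K,+)$ trivial on $\mathfrak{D}$, non-trivial on $\mathfrak{B}^{-1}$,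 $\chi_k(x)=\chi(u(k)x)$; $\hat f(\xi)=\int_Kf(x)\overline{\chi(\xi x)}dx$. Let $\varphi,\tilde\varphi\in L^2(K)$ and $\psi_\ell,\tilde\psi_\ell\in L^2(K)$ ($1\le\ell\le q-1$) satisfy $\varphi(x)=\sqrt q\sum_{k\in\mathbb{N}_0}a_k^0\varphi(\mathfrak{p}^{-1}x-u(k))$, $\psi_\ell(x)=\sqrt q\sum_ka_k^\ell\varphi(\mathfrak{p}^{-1}x-u(k))$, and the same with tildes (coefficients $\tilde a_k^s$), all coefficient sequences in $\ell^2(\mathbb{N}_0)$; masks $m_s(\xi)=\frac1{\sqrt q}\sum_ka_k^s\overline{\chi_k(\xi)}$, $\tilde m_s$ analogously ($0\le s\le q-1$). $\varphi$ is the scaling function of a multiresolution analysis of $L^2(K)$ and $\{\psi_\ell(\cdot-u(k))\}$ is a Riesz basis of a direct complement $W_0$ of $V_0$ in $V_1$. Biorthogonality: for all $k\in\mathbb{N}_0$, $1\le\ell,\ell'\le q-1$: $\langle\varphi,\tilde\varphi(\cdot-u(k))\rangle=\delta_{0,k}$, $\langle\varphi,\tilde\psi_\ell(\cdot-u(k))\rangle=0$, $\langle\tilde\varphi,\psi_\ell(\cdot-u(k))\rangle=0$, $\langle\psi_\ell,\tilde\psi_{\ell'}(\cdot-u(k))\rangle=\delta_{\ell,\ell'}\delta_{0,k}$. Wavelet packets: $\omega_0=\varphi$, $\tilde\omega_0=\tilde\varphi$, and for $n=qr+s$ with $r\in\mathbb{N}_0$, $0\le s\le q-1$: $\omega_n(x)=\sqrt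 q\sum_{k\in\mathbb{N}_0}a_k^s\omega_r(\mathfrak{p}^{-1}x-u(k))$, $\tilde\omega_n(x)=\sqrt q\sum_k\tilde a_k^s\tilde\omega_r(\mathfrak{p}^{-1}x-u(k))$. *)

theory Defs
  imports "HOL-Analysis.Analysis"
begin

definition ring_int :: "('k::field \<Rightarrow> real) \<Rightarrow> 'k set" where
  "ring_int absv = {x. absv x \<le> 1}"

definition prime_ideal :: "('k::field \<Rightarrow> real) \<Rightarrow> 'k set" where
  "prime_ideal absv = {x. absv x < 1}"

definition residue_classes :: "('k::field \<Rightarrow> real) \<Rightarrow> 'k set set" where
  "residue_classes absv =
     (\<lambda>x. {y \<in> ring_int absv. x - y \<in> prime_ideal absv}) ` ring_int absv"

definition local_field_pc ::
  "('k::field \<Rightarrow> real) \<Rightarrow> 'k measure \<Rightarrow> nat \<Rightarrow> nat \<Rightarrow> 'k \<Rightarrow> bool" where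
  "local_field_pc absv \<mu> p c pr \<longleftrightarrow>
     prime p \<and> CHAR('k) = p \<and> c \<ge> 1 \<and>
     (\<forall>x. absv x \<ge> 0) \<and> (\<forall>x. absv x = 0 \<longleftrightarrow> x = 0) \<and>
     (\<forall>x y. absv (x * y) = absv x * absv y) \<and>
     (\<forall>x y. absv (x + y) \<le> max (absv x) (absv y)) \<and>
     (\<forall>x. x \<noteq> 0 \<longrightarrow> (\<exists>n::int. absv x = real (p ^ c) powr real_of_int n)) \<and>
     absv pr = 1 / real (p ^ c) \<and>
     (\<forall>X::nat \<Rightarrow> 'k. (\<forall>e>0. \<exists>N. \<forall>m\<ge>N. \<forall>n\<ge>N. absv (X m - X n) < e) \<longrightarrow>
        (\<exists>L. \<forall>e>0. \<exists>N. \<forall>n\<ge>N. absv (X n - L) < e)) \<and>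
     finite (residue_classes absv) \<and> card (residue_classes absv) = p ^ c \<and>
     sets \<mu> = sigma_sets UNIV {{x. absv (x - a) \<le> r} | a r. True} \<and>
     (\<forall>a. (\<lambda>x. x + a) \<in> measurable \<mu> \<mu> \<and> distr \<mu> \<mu> (\<lambda>x. x + a) = \<mu>) \<and>
     emeasure \<mu> (ring_int absv) = 1"

definition residue_basis ::
  "('k::field \<Rightarrow> real) \<Rightarrow> nat \<Rightarrow> nat \<Rightarrow> (nat \<Rightarrow> 'k) \<Rightarrow> bool" where
  "residue_basis absv p c \<zeta> \<longleftrightarrow>
     \<zeta> 0 = 1 \<and> (\<forall>j<c. absv (\<zeta> j) = 1) \<and>
     (\<forall>x \<in> ring_int absv. \<exists>!a. a \<in> {..<c} \<rightarrow>\<^sub>E {..<p} \<and>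
        x - (\<Sum>j<c. of_nat (a j) * \<zeta> j) \<in> prime_ideal absv)"

definition u_digit :: "nat \<Rightarrow> nat \<Rightarrow> (nat \<Rightarrow> 'k::field) \<Rightarrow> 'k \<Rightarrow> nat \<Rightarrow> 'k" where
  "u_digit p c \<zeta> pr n = (\<Sum>j<c. of_nat (n div p ^ j mod p) * \<zeta> j) * inverse pr"

text \<open>u(n) for general n = b_0 + b_1 q + ... + b_s q^s: u(b_0) + u(b_1) pr^-1 + ... ;
  the digits with index i > n vanish, so summing up to n covers all digits.\<close>

definition u_pt :: "nat \<Rightarrow> nat \<Rightarrow> (nat \<Rightarrow> 'k::field) \<Rightarrow> 'k \<Rightarrow> nat \<Rightarrow> 'k" where
  "u_pt p c \<zeta> pr n =
     (\<Sum>i\<le>n. u_digit p c \<zeta> pr (n div (p ^ c) ^ i mod p ^ c) * inverse pr ^ i)"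

definition L2 :: "'k measure \<Rightarrow> ('k \<Rightarrow> complex) \<Rightarrow> bool" where
  "L2 \<mu> f \<longleftrightarrow> f \<in> borel_measurable \<mu> \<and> integrable \<mu> (\<lambda>x. (cmod (f x))\<^sup>2)"

definition l2_inner :: "'k measure \<Rightarrow> ('k \<Rightarrow> complex) \<Rightarrow> ('k \<Rightarrow> complex) \<Rightarrow> complex" where
  "l2_inner \<mu> f g = integral\<^sup>L \<mu> (\<lambda>x. f x * cnj (g x))"

definition l2_norm :: "'k measure \<Rightarrow> ('k \<Rightarrow> complex) \<Rightarrow> real" where
  "l2_norm \<mu> f = sqrt (integral\<^sup>L \<mu> (\<lambda>x. (cmod (f x))\<^sup>2))"

definition L2_limit :: "'k measure \<Rightarrow> (nat \<Rightarrow> 'k \<Rightarrow> complex) \<Rightarrow> ('k \<Rightarrow> complex) \<Rightarrow> bool" where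
  "L2_limit \<mu> S f \<longleftrightarrow> L2 \<mu> f \<and> (\<forall>N. L2 \<mu> (S N)) \<and>
     (\<lambda>N. l2_norm \<mu> (\<lambda>x. f x - S N x)) \<longlonglongrightarrow> 0"

text \<open>Closed subspace of L^2(K) (a set of functions closed under a.e.-equality).\<close>

definition closed_subspace :: "'k measure \<Rightarrow> ('k \<Rightarrow> complex) set \<Rightarrow> bool" where
  "closed_subspace \<mu> V \<longleftrightarrow>
     (\<forall>f\<in>V. L2 \<mu> f) \<and> (\<lambda>x. 0) \<in> V \<and>
     (\<forall>f\<in>V. \<forall>g\<in>V. (\<lambda>x. f x + g x) \<in> V) \<and>
     (\<forall>f\<in>V. \<forall>a. (\<lambda>x. a * f x) \<in> V) \<and>
     (\<forall>f\<in>V. \<forall>g. L2 \<mu> g \<and> (AE x in \<mu>. f x = g x) \<longrightarrow> g \<in> V) \<and>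
     (\<forall>S g. (\<forall>n. S n \<in> V) \<and> L2_limit \<mu> S g \<longrightarrow> g \<in> V)"

definition riesz_basis :: "'k measure \<Rightarrow> 'i set \<Rightarrow> ('i \<Rightarrow> 'k \<Rightarrow> complex) \<Rightarrow> ('k \<Rightarrow> complex) set \<Rightarrow> bool" where
  "riesz_basis \<mu> I e V \<longleftrightarrow>
     (\<forall>i\<in>I. e i \<in> V) \<and>
     (\<forall>g\<in>V. \<forall>\<epsilon>>0. \<exists>F c. finite F \<and> F \<subseteq> I \<and>
         l2_norm \<mu> (\<lambda>x. g x - (\<Sum>i\<in>F. c i * e i x)) < \<epsilon>) \<and>
     (\<exists>A B. 0 < A \<and> A \<le> B \<and>
        (\<forall>F c. finite F \<and> F \<subseteq> I \<longrightarrow>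
           A * (\<Sum>i\<in>F. (cmod (c i))\<^sup>2) \<le> (l2_norm \<mu> (\<lambda>x. \<Sum>i\<in>F. c i * e i x))\<^sup>2 \<and>
           (l2_norm \<mu> (\<lambda>x. \<Sum>i\<in>F. c i * e i x))\<^sup>2 \<le> B * (\<Sum>i\<in>F. (cmod (c i))\<^sup>2)))"

definition MRA :: "'k::field measure \<Rightarrow> 'k \<Rightarrow> (nat \<Rightarrow> 'k) \<Rightarrow> (int \<Rightarrow> ('k \<Rightarrow> complex) set)
                   \<Rightarrow> ('k \<Rightarrow> complex) \<Rightarrow> bool" where
  "MRA \<mu> pr u V \<phi> \<longleftrightarrow>
     (\<forall>j. closed_subspace \<mu> (V j)) \<and>
     (\<forall>j. V j \<subseteq> V (j + 1)) \<and>
     (\<forall>f. L2 \<mu> f \<longrightarrow> (\<forall>\<epsilon>>0. \<exists>j. \<exists>g\<in>V j. l2_norm \<mu> (\<lambda>x. f x - g x) < \<epsilon>)) \<and>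
     (\<Inter>j. V j) = {f. L2 \<mu> f \<and> (AE x in \<mu>. f x = 0)} \<and>
     (\<forall>j f. f \<in> V j \<longleftrightarrow> (\<lambda>x. f (inverse pr * x)) \<in> V (j + 1)) \<and>
     \<phi> \<in> V 0 \<and>
     riesz_basis \<mu> UNIV (\<lambda>k x. \<phi> (x - u k)) (V 0)"

definition refinement_eq ::
  "'k::field measure \<Rightarrow> nat \<Rightarrow> 'k \<Rightarrow> (nat \<Rightarrow> 'k) \<Rightarrow> ('k \<Rightarrow> complex) \<Rightarrow> (nat \<Rightarrow> complex)
     \<Rightarrow> ('k \<Rightarrow> complex) \<Rightarrow> bool" where
  "refinement_eq \<mu> q pr u f a g \<longleftrightarrow>
     L2_limit \<mu> (\<lambda>N x. of_real (sqrt (real q)) * (\<Sum>k<N. a k * g (inverse pr * x - u k))) f"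

end

(*
  Let g, gt be square-integrable with biorthogonal translates, <g, gt(. - u(m))> = delta(m,0),
  and let f, ft be refinements of g, gt with masks a, b, i.e. L^2-limits of the partial sums
  sqrt q * sum_(j<N) a_j g(pr^-1 x - u(j)) and similarly for ft. The substitution x -> pr^-1 x
  scales the Haar measure by 1/q and translation invariance moves all shifts onto one factor, so
  the inner product of the N-th partial sums of f and ft(. - u(k)) is the finite correlation
  sum_(j,l<N) a_j cnj(b_l) [u(j) = pr^-1 u(k) + u(l)]; this uses only that the points u(n) form an
  additive group stable under multiplication by pr^-1 (digitwise addition in characteristic p).
  Hence <f, ft(. - u(k))> is the limit of these correlations and depends on the masks alone.

  Since phi and the psi_l are themselves refinements of phi, phit with masks a^s, the
  biorthogonality of phi, phit, psi_l, psit_l shows that the correlations of a^s1 and a_t^s2 tend to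
  delta(k,0) delta(s1,s2). By induction on n every pair omega_n, omegat_n then has biorthogonal
  translates, and the same limit gives the relations for omega_(qr+s).
*)

theory Submission
  imports Defs
begin

section \<open>Square-integrable functions\<close>

lemma borel_measurable_cnj [measurable]:
  assumes "f \<in> borel_measurable M"
  shows "(\<lambda>x. cnj (f x)) \<in> borel_measurable M"
proof -
  have "cnj \<in> borel_measurable borel"
    by (intro borel_measurable_continuous_onI linear_continuous_on bounded_linear_cnj)
  with assms show ?thesis using measurable_compose by blast
qed

lemma integrable_scaleR_right_iff:
  fixes f :: "'a \<Rightarrow> 'b::{banach, second_countable_topology}"
  assumes "c \<noteq> 0"
  shows "integrable M (\<lambda>x. c *\<^sub>R f x) \<longleftrightarrow> integrable M f"
proof
  assume "integrable M (\<lambda>x. c *\<^sub>R f x)"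
  then have "integrable M (\<lambda>x. inverse c *\<^sub>R (c *\<^sub>R f x))" by (rule integrable_scaleR_right)
  then show "integrable M f" using assms by simp
qed (rule integrable_scaleR_right)

lemma L2_add:
  assumes "L2 M f" "L2 M g"
  shows "L2 M (\<lambda>x. f x + g x)"
proof -
  have [measurable]: "f \<in> borel_measurable M" "g \<in> borel_measurable M"
    using assms unfolding L2_def by auto
  have bound: "(cmod (f x + g x))\<^sup>2 \<le> 2 * (cmod (f x))\<^sup>2 + 2 * (cmod (g x))\<^sup>2" for x
  proof -
    have "(cmod (f x + g x))\<^sup>2 \<le> (cmod (f x) + cmod (g x))\<^sup>2"
      by (intro power_mono norm_triangle_ineq) simp
    also have "\<dots> \<le> 2 * (cmod (f x))\<^sup>2 + 2 * (cmod (g x))\<^sup>2"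
      using zero_le_power2[of "cmod (f x) - cmod (g x)"] by (simp add: power2_eq_square algebra_simps)
    finally show ?thesis .
  qed
  have "integrable M (\<lambda>x. 2 * (cmod (f x))\<^sup>2 + 2 * (cmod (g x))\<^sup>2)"
    using assms unfolding L2_def by simp
  then have "integrable M (\<lambda>x. (cmod (f x + g x))\<^sup>2)"
    by (rule Bochner_Integration.integrable_bound) (use bound in auto)
  then show ?thesis unfolding L2_def by simp
qed

lemma L2_cmult:
  assumes "L2 M f"
  shows "L2 M (\<lambda>x. a * f x)"
proof -
  have "f \<in> borel_measurable M" using assms unfolding L2_def by simp
  then have "(\<lambda>x. a * f x) \<in> borel_measurable M" by measurable
  then show ?thesis using assms unfolding L2_def by (simp add: norm_mult power_mult_distrib)
qed

lemma L2_diff: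
  assumes "L2 M f" "L2 M g"
  shows "L2 M (\<lambda>x. f x - g x)"
  using L2_add[OF assms(1) L2_cmult[OF assms(2), of "-1"]] by simp

lemma integrable_inner_L2:
  assumes "L2 M f" "L2 M g"
  shows "integrable M (\<lambda>x. f x * cnj (g x))"
proof -
  have [measurable]: "f \<in> borel_measurable M" "g \<in> borel_measurable M"
    using assms unfolding L2_def by auto
  have bound: "norm (f x * cnj (g x)) \<le> (cmod (f x))\<^sup>2 + (cmod (g x))\<^sup>2" for x
  proof -
    have "2 * (cmod (f x) * cmod (g x)) \<le> (cmod (f x))\<^sup>2 + (cmod (g x))\<^sup>2"
      using zero_le_power2[of "cmod (f x) - cmod (g x)"] by (simp add: power2_eq_square algebra_simps)
    moreover have "0 \<le> cmod (f x) * cmod (g x)" by simp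
    ultimately have "cmod (f x) * cmod (g x) \<le> (cmod (f x))\<^sup>2 + (cmod (g x))\<^sup>2" by linarith
    then show ?thesis by (simp add: norm_mult)
  qed
  have "integrable M (\<lambda>x. (cmod (f x))\<^sup>2 + (cmod (g x))\<^sup>2)"
    using assms unfolding L2_def by simp
  then show ?thesis
    by (rule Bochner_Integration.integrable_bound) (use bound in auto)
qed

lemma le_sqrt_mult_if_quadratic_nonneg:
  fixes X A B :: real
  assumes quad: "\<And>t. 0 \<le> t\<^sup>2 * A - 2 * t * X + B" and "0 \<le> A" "0 \<le> B"
  shows "X \<le> sqrt A * sqrt B"
proof (cases "A = 0")
  case True
  have "X \<le> 0"
  proof (rule ccontr)
    assume "\<not> X \<le> 0"
    with quad[of "(B + 1) / (2 * X)"] True show False by (simp add: field_simps)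
  qed
  then show ?thesis using True by simp
next
  case False
  with assms have "0 < A" by simp
  have "0 \<le> (X / A)\<^sup>2 * A - 2 * (X / A) * X + B" by (rule quad)
  with \<open>0 < A\<close> have "X\<^sup>2 \<le> A * B" by (simp add: field_simps power2_eq_square)
  then have "\<bar>X\<bar> \<le> sqrt (A * B)" by (metis real_sqrt_abs real_sqrt_le_mono)
  then show ?thesis by (simp add: real_sqrt_mult)
qed

lemma norm_l2_inner_le:
  assumes "L2 M f" "L2 M g"
  shows "cmod (l2_inner M f g) \<le> l2_norm M f * l2_norm M g"
proof -
  have [measurable]: "f \<in> borel_measurable M" "g \<in> borel_measurable M"
    and intf: "integrable M (\<lambda>x. (cmod (f x))\<^sup>2)" and intg: "integrable M (\<lambda>x. (cmod (g x))\<^sup>2)"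
    using assms unfolding L2_def by auto
  have intfg: "integrable M (\<lambda>x. cmod (f x) * cmod (g x))"
    using integrable_norm[OF integrable_inner_L2[OF assms]] by (simp add: norm_mult)
  define A where "A = (\<integral>x. (cmod (f x))\<^sup>2 \<partial>M)"
  define B where "B = (\<integral>x. (cmod (g x))\<^sup>2 \<partial>M)"
  define X where "X = (\<integral>x. cmod (f x) * cmod (g x) \<partial>M)"
  have "0 \<le> t\<^sup>2 * A - 2 * t * X + B" for t
  proof -
    have "0 \<le> (\<integral>x. (t * cmod (f x) - cmod (g x))\<^sup>2 \<partial>M)" by (rule integral_nonneg_AE) simp
    also have "\<dots> = (\<integral>x. t\<^sup>2 * (cmod (f x))\<^sup>2 - 2 * t * (cmod (f x) * cmod (g x)) + (cmod (g x))\<^sup>2 \<partial>M)"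
      by (simp add: power2_eq_square algebra_simps)
    also have "\<dots> = t\<^sup>2 * A - 2 * t * X + B"
      unfolding A_def B_def X_def using intf intg intfg by simp
    finally show ?thesis .
  qed
  then have "X \<le> sqrt A * sqrt B"
    by (rule le_sqrt_mult_if_quadratic_nonneg) (simp_all add: A_def B_def)
  moreover have "cmod (l2_inner M f g) \<le> X"
    unfolding l2_inner_def X_def using integral_norm_bound[of M "\<lambda>x. f x * cnj (g x)"]
    by (simp add: norm_mult)
  ultimately show ?thesis unfolding l2_norm_def A_def B_def by linarith
qed

lemma l2_inner_tendsto:
  assumes "L2_limit M S f" "L2_limit M R g"
  shows "(\<lambda>N. l2_inner M (S N) (R N)) \<longlonglongrightarrow> l2_inner M f g"
proof -
  have f: "L2 M f" and S: "\<And>N. L2 M (S N)" and g: "L2 M g" and R: "\<And>N. L2 M (R N)"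
    using assms unfolding L2_limit_def by auto
  define \<delta>S where "\<delta>S N x = S N x - f x" for N x
  define \<delta>R where "\<delta>R N x = R N x - g x" for N x
  have \<delta>S: "L2 M (\<delta>S N)" and \<delta>R: "L2 M (\<delta>R N)" for N
    unfolding \<delta>S_def \<delta>R_def using L2_diff[OF S f] L2_diff[OF R g] by auto
  have "(\<lambda>N. l2_norm M (\<delta>S N)) \<longlonglongrightarrow> 0" "(\<lambda>N. l2_norm M (\<delta>R N)) \<longlonglongrightarrow> 0"
    using assms unfolding L2_limit_def l2_norm_def \<delta>S_def \<delta>R_def by (simp_all add: norm_minus_commute)
  then have "(\<lambda>N. l2_norm M (\<delta>S N) * l2_norm M (\<delta>R N) + l2_norm M (\<delta>S N) * l2_norm M g
      + l2_norm M f * l2_norm M (\<delta>R N)) \<longlonglongrightarrow> 0 * 0 + 0 * l2_norm M g + l2_norm M f * 0"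
    by (intro tendsto_intros)
  then have bound0: "(\<lambda>N. l2_norm M (\<delta>S N) * l2_norm M (\<delta>R N) + l2_norm M (\<delta>S N) * l2_norm M g
      + l2_norm M f * l2_norm M (\<delta>R N)) \<longlonglongrightarrow> 0" by simp
  have split: "l2_inner M (S N) (R N) - l2_inner M f g =
      l2_inner M (\<delta>S N) (\<delta>R N) + l2_inner M (\<delta>S N) g + l2_inner M f (\<delta>R N)" for N
  proof -
    have "S N x * cnj (R N x) - f x * cnj (g x) =
        \<delta>S N x * cnj (\<delta>R N x) + \<delta>S N x * cnj (g x) + f x * cnj (\<delta>R N x)" for x
      unfolding \<delta>S_def \<delta>R_def by (simp add: algebra_simps)
    then show ?thesis
      using integrable_inner_L2[OF S R] integrable_inner_L2[OF f g] integrable_inner_L2[OF \<delta>S \<delta>R]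
        integrable_inner_L2[OF \<delta>S g] integrable_inner_L2[OF f \<delta>R]
      unfolding l2_inner_def by (simp flip: Bochner_Integration.integral_diff Bochner_Integration.integral_add)
  qed
  have "(\<lambda>N. l2_inner M (S N) (R N) - l2_inner M f g) \<longlonglongrightarrow> 0"
  proof (rule Lim_null_comparison[OF _ bound0], intro always_eventually allI)
    fix N
    show "norm (l2_inner M (S N) (R N) - l2_inner M f g) \<le> l2_norm M (\<delta>S N) * l2_norm M (\<delta>R N)
        + l2_norm M (\<delta>S N) * l2_norm M g + l2_norm M f * l2_norm M (\<delta>R N)"
      unfolding split
      using norm_l2_inner_le[OF \<delta>S[of N] \<delta>R[of N]] norm_l2_inner_le[OF \<delta>S[of N] g]
        norm_l2_inner_le[OF f \<delta>R[of N]]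
        norm_triangle_ineq[of "l2_inner M (\<delta>S N) (\<delta>R N) + l2_inner M (\<delta>S N) g" "l2_inner M f (\<delta>R N)"]
        norm_triangle_ineq[of "l2_inner M (\<delta>S N) (\<delta>R N)" "l2_inner M (\<delta>S N) g"]
      by linarith
  qed
  then show ?thesis by (rule LIM_zero_cancel)
qed

section \<open>Haar measure of a local field\<close>

lemma ennreal_eq_of_nat_mult_imp:
  assumes eq: "ennreal t = of_nat n * X" and "0 \<le> t" "0 < n"
  shows "X = ennreal (t / real n)"
proof (cases X)
  case (real y)
  then have "ennreal t = ennreal (real n * y)"
    using eq by (simp add: ennreal_of_nat_eq_real_of_nat ennreal_mult)
  then have "t = real n * y" using \<open>0 \<le> t\<close> real(1) by (simp add: ennreal_inj)
  then show ?thesis using real(2) \<open>0 < n\<close> by simp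
next
  case top
  then show ?thesis using eq \<open>0 < n\<close> by (simp add: ennreal_mult_eq_top_iff)
qed

locale local_field =
  fixes absv :: "'k::field \<Rightarrow> real" and \<mu> :: "'k measure" and p c :: nat and pr :: 'k
  assumes local_field: "local_field_pc absv \<mu> p c pr"
begin

definition q :: nat where "q = p ^ c"

lemma prime_p: "prime p" and CHAR_eq: "CHAR('k) = p" and c_ge_1: "c \<ge> 1"
  and absv_nonneg: "\<And>x. absv x \<ge> 0" and absv_eq_0_iff: "\<And>x. absv x = 0 \<longleftrightarrow> x = 0"
  and absv_mult: "\<And>x y. absv (x * y) = absv x * absv y"
  and absv_add_le_max: "\<And>x y. absv (x + y) \<le> max (absv x) (absv y)"
  and absv_value_group: "\<And>x. x \<noteq> 0 \<Longrightarrow> \<exists>n::int. absv x = real q powr real_of_int n"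
  and absv_prime: "absv pr = 1 / real q"
  and finite_residue_classes: "finite (residue_classes absv)"
  and card_residue_classes: "card (residue_classes absv) = q"
  and sets_eq: "sets \<mu> = sigma_sets UNIV {{x. absv (x - a) \<le> r} | a r. True}"
  and measurable_translate: "\<And>a. (\<lambda>x. x + a) \<in> measurable \<mu> \<mu>"
  and distr_translate: "\<And>a. distr \<mu> \<mu> (\<lambda>x. x + a) = \<mu>"
  and emeasure_ring_int: "emeasure \<mu> (ring_int absv) = 1"
  using local_field unfolding local_field_pc_def q_def by auto

lemma q_ge_2: "q \<ge> 2"
proof -
  have "p \<ge> 2" using prime_p prime_ge_2_nat by blast
  moreover have "p ^ 1 \<le> p ^ c" using c_ge_1 \<open>p \<ge> 2\<close> by (intro power_increasing) auto
  ultimately show ?thesis unfolding q_def by simp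
qed

lemma q_gt_1: "1 < real q"
  using q_ge_2 by linarith

lemma q_pos: "0 < real q"
  using q_gt_1 by linarith

lemma absv_1: "absv 1 = 1"
  using absv_mult[of 1 1] absv_eq_0_iff[of 1] by simp

lemma absv_minus: "absv (- x) = absv x"
proof -
  have "absv (-1) * absv (-1) = 1" using absv_mult[of "-1" "-1"] absv_1 by simp
  then have "(absv (-1) - 1) * (absv (-1) + 1) = 0" by (simp add: algebra_simps)
  moreover have "absv (-1) + 1 \<noteq> 0" using absv_nonneg[of "-1"] by linarith
  ultimately have "absv (-1) = 1" by simp
  then show ?thesis using absv_mult[of "-1" x] by simp
qed

lemma absv_minus_commute: "absv (x - y) = absv (y - x)"
  using absv_minus[of "x - y"] by simp

lemma absv_diff_le_max: "absv (x - z) \<le> max (absv (x - y)) (absv (y - z))"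
  using absv_add_le_max[of "x - y" "y - z"] by simp

lemma absv_power: "absv (x ^ n) = absv x ^ n"
  by (induction n) (simp_all add: absv_1 absv_mult)

lemma prime_nonzero: "pr \<noteq> 0"
proof
  assume "pr = 0"
  then have "absv pr = 0" using absv_eq_0_iff by simp
  moreover have "0 < 1 / real q" using q_pos by (rule divide_pos_pos[OF zero_less_one])
  ultimately show False using absv_prime by linarith
qed

lemma absv_inverse_prime: "absv (inverse pr) = real q"
proof -
  have "absv (inverse pr) * absv pr = 1" using absv_mult[of "inverse pr" pr] absv_1 prime_nonzero by simp
  then show ?thesis using absv_prime q_gt_1 by (simp add: field_simps del: of_nat_power)
qed

lemma absv_less_1_imp_le: "absv x < 1 \<Longrightarrow> absv x \<le> 1 / real q"
proof (cases "x = 0")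
  case False
  assume "absv x < 1"
  obtain n :: int where n: "absv x = real q powr n" using absv_value_group False by blast
  have "n \<le> -1"
  proof (rule ccontr)
    assume "\<not> n \<le> -1"
    then have "1 \<le> real q powr n" using q_gt_1 by (intro ge_one_powr_ge_zero) auto
    with n \<open>absv x < 1\<close> show False by simp
  qed
  then have "real q powr n \<le> real q powr (-1)" using q_gt_1 by (intro powr_mono) auto
  then show ?thesis using n q_gt_1 by (simp add: powr_neg_one)
qed (use absv_eq_0_iff[of 0] q_gt_1 in simp)

definition closed_ball :: "'k \<Rightarrow> real \<Rightarrow> 'k set" where
  "closed_ball a r = {x. absv (x - a) \<le> r}"

lemma sets_eq_balls: "sets \<mu> = sigma_sets UNIV {closed_ball a r | a r. True}"
  using sets_eq unfolding closed_ball_def .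

lemma space_eq: "space \<mu> = UNIV"
  using sets.sets_into_space[of UNIV \<mu>] sigma_sets_top[of UNIV] unfolding sets_eq_balls by blast

lemma closed_ball_sets [measurable]: "closed_ball a r \<in> sets \<mu>"
  unfolding sets_eq_balls by (rule sigma_sets.Basic) blast

lemma closed_ball_recenter:
  assumes "b \<in> closed_ball a r"
  shows "closed_ball b r = closed_ball a r"
proof -
  have ba: "absv (b - a) \<le> r" "absv (a - b) \<le> r"
    using assms absv_minus_commute[of a b] unfolding closed_ball_def by auto
  have "absv (x - a) \<le> r \<longleftrightarrow> absv (x - b) \<le> r" for x
    using absv_diff_le_max[of x b a] absv_diff_le_max[of x a b] ba by auto
  then show ?thesis unfolding closed_ball_def by blast
qed

lemma closed_ball_negative_radius: "r < 0 \<Longrightarrow> closed_ball a r = {}"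
  using absv_nonneg unfolding closed_ball_def by (auto simp: not_le intro: less_le_trans)

lemma closed_ball_0_radius: "closed_ball a 0 = {a}"
proof -
  have "absv (x - a) \<le> 0 \<longleftrightarrow> x = a" for x
    using absv_eq_0_iff[of "x - a"] absv_nonneg[of "x - a"] by auto
  then show ?thesis unfolding closed_ball_def by auto
qed

lemma Int_stable_balls: "Int_stable {closed_ball a r | a r. True}"
proof (rule Int_stableI)
  fix A B assume "A \<in> {closed_ball a r | a r. True}" "B \<in> {closed_ball a r | a r. True}"
  then obtain a r b s where AB: "A = closed_ball a r" "B = closed_ball b s" by blast
  show "A \<inter> B \<in> {closed_ball a r | a r. True}"
  proof (cases "A \<inter> B = {}")
    case True
    then have "A \<inter> B = closed_ball 0 (-1)" using closed_ball_negative_radius by simp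
    then show ?thesis by blast
  next
    case False
    then obtain z where "z \<in> A" "z \<in> B" by blast
    then have "A = closed_ball z r" "B = closed_ball z s"
      using closed_ball_recenter AB by auto
    then have "A \<inter> B = closed_ball z (min r s)" unfolding closed_ball_def by auto
    then show ?thesis by blast
  qed
qed

lemma closed_ball_dilate:
  assumes "l \<noteq> 0"
  shows "(\<lambda>z. inverse l * z) -` closed_ball a r = closed_ball (l * a) (absv l * r)"
proof -
  have "z - l * a = l * (inverse l * z - a)" for z
    using assms by (simp add: algebra_simps)
  then have "absv (z - l * a) = absv l * absv (inverse l * z - a)" for z
    using absv_mult by metis
  moreover have "0 < absv l" using assms absv_nonneg[of l] absv_eq_0_iff[of l] by linarith
  ultimately show ?thesis unfolding closed_ball_def by auto
qed

lemma emeasure_translate: "X \<in> sets \<mu> \<Longrightarrow> emeasure \<mu> ((\<lambda>x. x + a) -` X) = emeasure \<mu> X"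
  using emeasure_distr[OF measurable_translate, of X a] distr_translate space_eq by simp

lemma emeasure_closed_ball_translate: "emeasure \<mu> (closed_ball a r) = emeasure \<mu> (closed_ball 0 r)"
proof -
  have "(\<lambda>x. x + a) -` closed_ball a r = closed_ball 0 r" unfolding closed_ball_def by auto
  then show ?thesis using emeasure_translate[of "closed_ball a r" a] by simp
qed

lemma residue_class_eq_closed_ball:
  assumes "C \<in> residue_classes absv"
  shows "\<exists>x. C = closed_ball x (1 / real q)"
proof -
  obtain x where x: "absv x \<le> 1" and C: "C = {y \<in> ring_int absv. x - y \<in> prime_ideal absv}"
    using assms unfolding residue_classes_def ring_int_def by blast
  have "1 / real q < 1" using q_gt_1 by simp
  have "y \<in> C \<longleftrightarrow> absv (y - x) \<le> 1 / real q" for y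
  proof
    assume "y \<in> C"
    then show "absv (y - x) \<le> 1 / real q"
      using absv_less_1_imp_le absv_minus_commute unfolding C prime_ideal_def by simp
  next
    assume le: "absv (y - x) \<le> 1 / real q"
    then have "absv y \<le> 1"
      using absv_add_le_max[of x "y - x"] x \<open>1 / real q < 1\<close> by simp
    then show "y \<in> C"
      using le \<open>1 / real q < 1\<close> absv_minus_commute[of x y]
      unfolding C ring_int_def prime_ideal_def by simp
  qed
  then show ?thesis unfolding closed_ball_def by blast
qed

lemma Union_residue_classes: "\<Union> (residue_classes absv) = closed_ball 0 1"
proof -
  have "y \<in> {z \<in> ring_int absv. y - z \<in> prime_ideal absv}" if "y \<in> ring_int absv" for y
    using that absv_eq_0_iff[of 0] unfolding prime_ideal_def by simp
  then have "\<Union> (residue_classes absv) = ring_int absv"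
    unfolding residue_classes_def by blast
  then show ?thesis unfolding ring_int_def closed_ball_def by simp
qed

lemma residue_classes_disjoint:
  assumes "C \<in> residue_classes absv" "C' \<in> residue_classes absv" "z \<in> C" "z \<in> C'"
  shows "C = C'"
  using assms residue_class_eq_closed_ball closed_ball_recenter by metis

text \<open>A ball of radius \<open>absv l\<close> is the disjoint union of the \<open>q\<close> images of the residue classes
  under \<open>x \<mapsto> l x\<close>, each a translate of the ball of radius \<open>absv l / q\<close>.\<close>

lemma emeasure_closed_ball_absv:
  assumes l: "l \<noteq> 0"
  shows "emeasure \<mu> (closed_ball 0 (absv l)) = of_nat q * emeasure \<mu> (closed_ball 0 (absv l / real q))"
proof -
  define F where "F C = (\<lambda>z. inverse l * z) -` C" for C
  have F_ball: "\<exists>x. F C = closed_ball x (absv l / real q)" if "C \<in> residue_classes absv" for C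
    using residue_class_eq_closed_ball[OF that] closed_ball_dilate[OF l] unfolding F_def by auto
  have "(\<Union>C\<in>residue_classes absv. F C) = (\<lambda>z. inverse l * z) -` \<Union> (residue_classes absv)"
    unfolding F_def by blast
  also have "\<dots> = closed_ball 0 (absv l)"
    using closed_ball_dilate[OF l, of 0 1] Union_residue_classes by simp
  finally have "(\<Union>C\<in>residue_classes absv. F C) = closed_ball 0 (absv l)" .
  moreover have "disjoint_family_on F (residue_classes absv)"
    unfolding disjoint_family_on_def F_def using residue_classes_disjoint by blast
  moreover have "F ` residue_classes absv \<subseteq> sets \<mu>"
    using F_ball by (metis closed_ball_sets image_subsetI)
  moreover have "emeasure \<mu> (F C) = emeasure \<mu> (closed_ball 0 (absv l / real q))"
    if "C \<in> residue_classes absv" for C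
    using F_ball[OF that] emeasure_closed_ball_translate by auto
  ultimately show ?thesis
    using sum_emeasure[of F "residue_classes absv" \<mu>] finite_residue_classes card_residue_classes
    by simp
qed

lemma emeasure_closed_ball_prime_power:
  "emeasure \<mu> (closed_ball 0 ((1 / real q) ^ n)) = ennreal ((1 / real q) ^ n)"
proof (induction n)
  case 0
  then show ?case using emeasure_ring_int unfolding ring_int_def closed_ball_def by simp
next
  case (Suc n)
  have "absv (pr ^ n) = (1 / real q) ^ n" by (simp add: absv_power absv_prime)
  then have "ennreal ((1 / real q) ^ n) = of_nat q * emeasure \<mu> (closed_ball 0 ((1 / real q) ^ n / real q))"
    using emeasure_closed_ball_absv[of "pr ^ n"] prime_nonzero Suc.IH by simp
  then have "emeasure \<mu> (closed_ball 0 ((1 / real q) ^ n / real q)) = ennreal ((1 / real q) ^ n / real q)"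
    by (rule ennreal_eq_of_nat_mult_imp) (use q_ge_2 in auto)
  then show ?case by (simp add: field_simps)
qed

lemma emeasure_singleton: "emeasure \<mu> {a} = 0"
proof -
  have "emeasure \<mu> (closed_ball 0 0) \<le> ennreal ((1 / real q) ^ n)" for n
  proof -
    have "closed_ball 0 0 \<subseteq> closed_ball 0 ((1 / real q) ^ n)"
      using q_pos unfolding closed_ball_def by (auto intro: order_trans[OF _ zero_le_power])
    then show ?thesis
      using emeasure_mono[OF _ closed_ball_sets] emeasure_closed_ball_prime_power by metis
  qed
  moreover have "(\<lambda>n. ennreal ((1 / real q) ^ n)) \<longlonglongrightarrow> ennreal 0"
    using q_gt_1 by (intro tendsto_ennrealI LIMSEQ_power_zero) simp
  ultimately have "emeasure \<mu> (closed_ball 0 0) \<le> ennreal 0"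
    by (intro LIMSEQ_le_const) auto
  then show ?thesis
    using emeasure_closed_ball_translate[of a 0] closed_ball_0_radius by simp
qed

lemma absv_le_iff_le_value_group:
  fixes m :: int
  assumes "real q powr m \<le> s" "s < real q powr (m + 1)"
  shows "absv x \<le> s \<longleftrightarrow> absv x \<le> real q powr m"
proof (cases "x = 0")
  case True
  then have "absv x = 0" using absv_eq_0_iff by simp
  moreover have "0 < real q powr m" using q_pos by simp
  ultimately show ?thesis using assms(1) by linarith
next
  case False
  then obtain k :: int where k: "absv x = real q powr k" using absv_value_group by blast
  show ?thesis
  proof (cases "k \<le> m")
    case True
    then have "real q powr k \<le> real q powr m" using q_gt_1 by (intro powr_mono) auto
    then show ?thesis using k assms by linarith
  next
    case False
    then have "real q powr (m + 1) \<le> real q powr k" using q_gt_1 by (intro powr_mono) auto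
    moreover have "real q powr m < real q powr (m + 1)" using q_gt_1 by simp
    ultimately show ?thesis using k assms by linarith
  qed
qed

lemma absv_surj_value_group: "\<exists>l. l \<noteq> 0 \<and> absv l = real q powr real_of_int n"
proof (cases "n \<ge> 0")
  case True
  have "absv (inverse pr ^ nat n) = real q ^ nat n" by (simp add: absv_power absv_inverse_prime)
  also have "\<dots> = real q powr real (nat n)" using q_pos by (simp add: powr_realpow)
  also have "real (nat n) = real_of_int n" using True by simp
  finally show ?thesis using prime_nonzero by (metis inverse_nonzero_iff_nonzero power_not_zero)
next
  case False
  have "absv (pr ^ nat (-n)) = inverse (real q ^ nat (-n))"
    by (simp add: absv_power absv_prime power_one_over inverse_eq_divide)
  also have "\<dots> = real q powr real_of_int n"
    using False q_pos by (simp add: powr_realpow[symmetric] powr_minus)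
  finally show ?thesis using prime_nonzero by (metis power_not_zero)
qed

lemma closed_ball_eq_absv_radius:
  assumes "0 < r"
  obtains l where "l \<noteq> 0" "closed_ball 0 r = closed_ball 0 (absv l)"
    "closed_ball 0 (r / real q) = closed_ball 0 (absv l / real q)"
proof -
  define n where "n = \<lfloor>log (real q) r\<rfloor>"
  have n: "real q powr n \<le> r" "r < real q powr (n + 1)"
    using floor_log_eq_powr_iff[OF assms q_gt_1] n_def by auto
  obtain l where l: "l \<noteq> 0" "absv l = real q powr n" using absv_surj_value_group by blast
  have pred: "real q powr real_of_int (n - 1) = real q powr n / real q"
    using q_pos by (simp add: powr_diff)
  have succ: "real q powr (real_of_int n + 1) = real q powr n * real q"
    using q_pos by (simp add: powr_add)
  have "real q powr real_of_int (n - 1) \<le> r / real q"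
    unfolding pred using n(1) q_pos by (simp add: divide_right_mono)
  moreover have "r / real q < real q powr real_of_int (n - 1 + 1)"
    using n(2) q_pos succ by (simp add: divide_less_eq)
  ultimately have "absv x \<le> r / real q \<longleftrightarrow> absv x \<le> absv l / real q" for x
    using absv_le_iff_le_value_group[of "n - 1" "r / real q" x] unfolding pred l(2) by blast
  then have "closed_ball 0 (r / real q) = closed_ball 0 (absv l / real q)"
    unfolding closed_ball_def by simp
  moreover have "absv x \<le> r \<longleftrightarrow> absv x \<le> absv l" for x
    using absv_le_iff_le_value_group[OF n, of x] unfolding l(2) .
  then have "closed_ball 0 r = closed_ball 0 (absv l)"
    unfolding closed_ball_def by simp
  ultimately show ?thesis using l that by blast
qed

lemma emeasure_closed_ball_eq_q_mult:
  "emeasure \<mu> (closed_ball a r) = of_nat q * emeasure \<mu> (closed_ball a (r / real q))"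
proof -
  consider "r < 0" | "r = 0" | "0 < r" by linarith
  then have "emeasure \<mu> (closed_ball 0 r) = of_nat q * emeasure \<mu> (closed_ball 0 (r / real q))"
  proof cases
    case 1
    moreover have "r / real q < 0" using 1 q_pos by (rule divide_neg_pos)
    ultimately show ?thesis using closed_ball_negative_radius by simp
  next
    case 2
    then show ?thesis using closed_ball_0_radius emeasure_singleton by simp
  next
    case 3
    then obtain l where "l \<noteq> 0" "closed_ball 0 r = closed_ball 0 (absv l)"
      "closed_ball 0 (r / real q) = closed_ball 0 (absv l / real q)"
      by (rule closed_ball_eq_absv_radius)
    then show ?thesis using emeasure_closed_ball_absv by simp
  qed
  then show ?thesis
    using emeasure_closed_ball_translate[of a r] emeasure_closed_ball_translate[of a "r / real q"] by simp
qed

lemma emeasure_closed_ball_finite: "emeasure \<mu> (closed_ball a r) \<noteq> \<infinity>"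
proof -
  have finite_pow: "emeasure \<mu> (closed_ball 0 (real q ^ i)) \<noteq> \<infinity>" for i
  proof (induction i)
    case 0
    then show ?case using emeasure_ring_int unfolding ring_int_def closed_ball_def by simp
  next
    case (Suc i)
    then show ?case
      using emeasure_closed_ball_eq_q_mult[of 0 "real q ^ Suc i"] q_gt_1
      by (simp add: ennreal_mult_eq_top_iff)
  qed
  obtain i where "r < real q ^ i" using real_arch_pow[OF q_gt_1] by blast
  then have "closed_ball 0 r \<subseteq> closed_ball 0 (real q ^ i)" unfolding closed_ball_def by auto
  then have "emeasure \<mu> (closed_ball 0 r) \<noteq> \<infinity>"
    using emeasure_mono[OF _ closed_ball_sets] finite_pow[of i] by (metis infinity_ennreal_def top_unique)
  then show ?thesis using emeasure_closed_ball_translate[of a r] by simp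
qed

lemma measurable_dilate [measurable]: "(\<lambda>x. inverse pr * x) \<in> measurable \<mu> \<mu>"
proof (rule measurable_sigma_sets[OF sets_eq_balls])
  fix B assume "B \<in> {closed_ball a r | a r. True}"
  then show "(\<lambda>x. inverse pr * x) -` B \<inter> space \<mu> \<in> sets \<mu>"
    using closed_ball_dilate[OF prime_nonzero] by auto
qed auto

lemma distr_dilate: "distr \<mu> \<mu> (\<lambda>x. inverse pr * x) = density \<mu> (\<lambda>_. ennreal (1 / real q))"
proof (rule measure_eqI_generator_eq[OF Int_stable_balls, of UNIV _ _ "\<lambda>i. closed_ball 0 (real q ^ i)"])
  have preimage: "emeasure (distr \<mu> \<mu> (\<lambda>x. inverse pr * x)) (closed_ball a r)
      = emeasure \<mu> (closed_ball (pr * a) (r / real q))" for a r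
    using emeasure_distr[OF measurable_dilate closed_ball_sets] closed_ball_dilate[OF prime_nonzero]
      absv_prime space_eq by simp
  show "emeasure (distr \<mu> \<mu> (\<lambda>x. inverse pr * x)) (closed_ball 0 (real q ^ i)) \<noteq> \<infinity>" for i
    unfolding preimage by (rule emeasure_closed_ball_finite)
  show "(\<Union>i. closed_ball 0 (real q ^ i)) = UNIV"
    using real_arch_pow[OF q_gt_1] unfolding closed_ball_def by (auto intro: less_imp_le)
  fix X assume "X \<in> {closed_ball a r | a r. True}"
  then obtain a r where X: "X = closed_ball a r" by blast
  have "ennreal (1 / real q) * of_nat q = 1"
    using q_gt_1 by (simp add: ennreal_of_nat_eq_real_of_nat ennreal_mult[symmetric])
  then have "ennreal (1 / real q) * emeasure \<mu> (closed_ball a r) = emeasure \<mu> (closed_ball a (r / real q))"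
    unfolding emeasure_closed_ball_eq_q_mult[of a r] by (simp add: mult.assoc[symmetric])
  then show "emeasure (distr \<mu> \<mu> (\<lambda>x. inverse pr * x)) X = emeasure (density \<mu> (\<lambda>_. ennreal (1 / real q))) X"
    unfolding X preimage using emeasure_closed_ball_translate[of "pr * a"] emeasure_closed_ball_translate[of a]
    by (simp add: emeasure_density nn_integral_cmult_indicator)
qed (auto simp: sets_eq_balls)

lemma integral_translate:
  fixes h :: "'k \<Rightarrow> 'b::{banach, second_countable_topology}"
  assumes "h \<in> borel_measurable \<mu>"
  shows "(\<integral>x. h (x + a) \<partial>\<mu>) = integral\<^sup>L \<mu> h"
  using integral_distr[OF measurable_translate assms] distr_translate by simp

lemma integrable_translate_iff:
  fixes h :: "'k \<Rightarrow> 'b::{banach, second_countable_topology}"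
  assumes "h \<in> borel_measurable \<mu>"
  shows "integrable \<mu> (\<lambda>x. h (x + a)) \<longleftrightarrow> integrable \<mu> h"
  using integrable_distr_eq[OF measurable_translate assms] distr_translate by simp

lemma integral_dilate:
  fixes h :: "'k \<Rightarrow> 'b::{banach, second_countable_topology}"
  assumes "h \<in> borel_measurable \<mu>"
  shows "(\<integral>x. h (inverse pr * x) \<partial>\<mu>) = (1 / real q) *\<^sub>R integral\<^sup>L \<mu> h"
  using integral_distr[OF measurable_dilate assms] integral_density[OF assms, of "\<lambda>_. 1 / real q"]
  unfolding distr_dilate by simp

lemma integrable_dilate_iff:
  fixes h :: "'k \<Rightarrow> 'b::{banach, second_countable_topology}"
  assumes "h \<in> borel_measurable \<mu>"
  shows "integrable \<mu> (\<lambda>x. h (inverse pr * x)) \<longleftrightarrow> integrable \<mu> h"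
proof -
  have "integrable \<mu> (\<lambda>x. h (inverse pr * x)) \<longleftrightarrow> integrable (density \<mu> (\<lambda>_. ennreal (1 / real q))) h"
    using integrable_distr_eq[OF measurable_dilate assms] unfolding distr_dilate by simp
  also have "\<dots> \<longleftrightarrow> integrable \<mu> (\<lambda>x. (1 / real q) *\<^sub>R h x)"
    by (rule integrable_density[OF assms]) auto
  also have "\<dots> \<longleftrightarrow> integrable \<mu> h"
    using q_pos by (intro integrable_scaleR_right_iff) simp
  finally show ?thesis .
qed

lemma L2_translate:
  assumes "L2 \<mu> h"
  shows "L2 \<mu> (\<lambda>x. h (x - a))"
proof -
  have meas: "h \<in> borel_measurable \<mu>" using assms unfolding L2_def by simp
  then have "(\<lambda>x. h (x + - a)) \<in> borel_measurable \<mu>"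
    using measurable_compose[OF measurable_translate] by blast
  moreover have "(\<lambda>y. (cmod (h y))\<^sup>2) \<in> borel_measurable \<mu>" using meas by measurable
  then have "integrable \<mu> (\<lambda>x. (cmod (h (x + - a)))\<^sup>2)"
    using integrable_translate_iff[of "\<lambda>y. (cmod (h y))\<^sup>2" "- a"] assms unfolding L2_def by simp
  ultimately show ?thesis unfolding L2_def by simp
qed

lemma L2_dilate_translate:
  assumes "L2 \<mu> h"
  shows "L2 \<mu> (\<lambda>x. h (inverse pr * x - a))"
proof -
  have meas: "(\<lambda>x. h (x - a)) \<in> borel_measurable \<mu>"
    and int: "integrable \<mu> (\<lambda>x. (cmod (h (x - a)))\<^sup>2)"
    using L2_translate[OF assms] unfolding L2_def by auto
  have "(\<lambda>x. h (inverse pr * x - a)) \<in> borel_measurable \<mu>"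
    using measurable_compose[OF measurable_dilate meas] by simp
  moreover have "(\<lambda>y. (cmod (h (y - a)))\<^sup>2) \<in> borel_measurable \<mu>" using meas by measurable
  then have "integrable \<mu> (\<lambda>x. (cmod (h (inverse pr * x - a)))\<^sup>2)"
    using integrable_dilate_iff[of "\<lambda>y. (cmod (h (y - a)))\<^sup>2"] int by simp
  ultimately show ?thesis unfolding L2_def by simp
qed

lemma L2_limit_translate:
  assumes "L2_limit \<mu> S f"
  shows "L2_limit \<mu> (\<lambda>N x. S N (x - a)) (\<lambda>x. f (x - a))"
proof -
  have f: "L2 \<mu> f" and S: "\<And>N. L2 \<mu> (S N)"
    using assms unfolding L2_limit_def by auto
  have [measurable]: "f \<in> borel_measurable \<mu>" "S N \<in> borel_measurable \<mu>" for N
    using f S unfolding L2_def by auto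
  have "l2_norm \<mu> (\<lambda>x. f (x - a) - S N (x - a)) = l2_norm \<mu> (\<lambda>x. f x - S N x)" for N
  proof -
    have "(\<lambda>x. (cmod (f x - S N x))\<^sup>2) \<in> borel_measurable \<mu>" by measurable
    then have "(\<integral>x. (cmod (f (x + - a) - S N (x + - a)))\<^sup>2 \<partial>\<mu>) = (\<integral>x. (cmod (f x - S N x))\<^sup>2 \<partial>\<mu>)"
      by (rule integral_translate)
    then show ?thesis unfolding l2_norm_def by simp
  qed
  then show ?thesis
    using assms L2_translate[OF f] L2_translate[OF S] unfolding L2_limit_def by simp
qed

lemma l2_inner_translate_swap:
  assumes "L2 \<mu> f" "L2 \<mu> g"
  shows "l2_inner \<mu> f (\<lambda>x. g (x - a)) = cnj (l2_inner \<mu> g (\<lambda>x. f (x + a)))"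
proof -
  have "(\<lambda>x. f x * cnj (g (x - a))) \<in> borel_measurable \<mu>"
    using integrable_inner_L2[OF assms(1) L2_translate[OF assms(2)]] by (rule borel_measurable_integrable)
  then have "l2_inner \<mu> f (\<lambda>x. g (x - a)) = (\<integral>x. f (x + a) * cnj (g x) \<partial>\<mu>)"
    unfolding l2_inner_def using integral_translate[of "\<lambda>x. f x * cnj (g (x - a))" a] by simp
  also have "\<dots> = (\<integral>x. cnj (g x * cnj (f (x + a))) \<partial>\<mu>)"
    by (rule Bochner_Integration.integral_cong) (simp_all add: mult.commute)
  also have "\<dots> = cnj (l2_inner \<mu> g (\<lambda>x. f (x + a)))"
    unfolding l2_inner_def by (rule Bochner_Integration.integral_cnj)
  finally show ?thesis .
qed

end

section \<open>The translation points\<close>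

lemma base_expansion_digits:
  fixes p :: nat
  assumes "\<forall>j<c. g j < p"
  shows "(\<Sum>j<c. g j * p ^ j) < p ^ c \<and> (\<forall>i<c. (\<Sum>j<c. g j * p ^ j) div p ^ i mod p = g i)"
  using assms
proof (induction c arbitrary: g)
  case (Suc c)
  define m where "m = (\<Sum>j<c. g (Suc j) * p ^ j)"
  have IH: "m < p ^ c" "\<forall>i<c. m div p ^ i mod p = g (Suc i)"
    unfolding m_def using Suc.IH[of "\<lambda>j. g (Suc j)"] Suc.prems by auto
  have g0: "g 0 < p" using Suc.prems by simp
  have sum_eq: "(\<Sum>j<Suc c. g j * p ^ j) = g 0 + p * m"
    unfolding m_def sum.lessThan_Suc_shift by (simp add: sum_distrib_left algebra_simps)
  have "p * (m + 1) \<le> p * p ^ c" using IH by (intro mult_le_mono2) simp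
  then have "g 0 + p * m < p ^ Suc c" using g0 by simp
  moreover have "(g 0 + p * m) div p ^ i mod p = g i" if "i < Suc c" for i
  proof (cases i)
    case 0
    then show ?thesis using g0 by simp
  next
    case (Suc i')
    have "(g 0 + p * m) div p ^ i = (g 0 + p * m) div p div p ^ i'"
      unfolding Suc power_Suc by (rule div_mult2_eq)
    also have "\<dots> = m div p ^ i'" using g0 by simp
    finally show ?thesis using IH Suc that by simp
  qed
  ultimately show ?case unfolding sum_eq by blast
qed simp

definition dilation_stable_lattice :: "'k::field \<Rightarrow> (nat \<Rightarrow> 'k) \<Rightarrow> bool" where
  "dilation_stable_lattice pr u \<longleftrightarrow>
     u 0 = 0 \<and> (\<forall>j k. \<exists>m. u m = u j - u k) \<and> (\<forall>k. \<exists>m. u m = inverse pr * u k)"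

lemma dilation_stable_lattice_affine:
  assumes "dilation_stable_lattice pr u"
  obtains m where "u m = inverse pr * u k + u l - u j"
proof -
  obtain m1 where m1: "u m1 = inverse pr * u k" using assms unfolding dilation_stable_lattice_def by blast
  obtain m2 where m2: "u m2 = u j - u l" using assms unfolding dilation_stable_lattice_def by blast
  obtain m where "u m = u m1 - u m2" using assms unfolding dilation_stable_lattice_def by blast
  then show ?thesis using m1 m2 that by (simp add: algebra_simps)
qed

lemma dilation_stable_lattice_uminus:
  assumes "dilation_stable_lattice pr u"
  obtains m where "u m = - u k"
  using assms unfolding dilation_stable_lattice_def by (metis diff_0)

context local_field
begin

lemma of_nat_mod_p: "(of_nat a :: 'k) = of_nat (a mod p)"
proof -
  have "(of_nat a :: 'k) = of_nat (a mod p) + of_nat p * of_nat (a div p)"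
    by (metis mod_mult_div_eq of_nat_add of_nat_mult)
  moreover have "(of_nat p :: 'k) = 0" using of_nat_CHAR[where 'a='k] CHAR_eq by simp
  ultimately show ?thesis by simp
qed

context
  fixes \<zeta> :: "nat \<Rightarrow> 'k"
begin

private abbreviation ud :: "nat \<Rightarrow> 'k" where "ud \<equiv> u_digit p c \<zeta> pr"
private abbreviation u :: "nat \<Rightarrow> 'k" where "u \<equiv> u_pt p c \<zeta> pr"

lemma u_digit_0: "ud 0 = 0"
  unfolding u_digit_def by simp

lemma u_pt_0: "u 0 = 0"
  unfolding u_pt_def using u_digit_0 by simp

lemma u_pt_eq_sum:
  assumes "n < L"
  shows "u n = (\<Sum>i<L. ud (n div q ^ i mod q) * inverse pr ^ i)"
proof -
  have "ud (n div q ^ i mod q) * inverse pr ^ i = 0" if "Suc n \<le> i" for i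
  proof -
    have "n < 2 ^ n" by (rule less_exp)
    also have "(2::nat) ^ n \<le> q ^ n" using q_ge_2 by (rule power_mono) simp
    also have "q ^ n \<le> q ^ i" using q_ge_2 that by (intro power_increasing) simp_all
    finally show ?thesis using u_digit_0 by simp
  qed
  then have "(\<Sum>i<Suc n. ud (n div q ^ i mod q) * inverse pr ^ i) = (\<Sum>i<L. ud (n div q ^ i mod q) * inverse pr ^ i)"
    using assms by (intro sum.mono_neutral_left) auto
  then show ?thesis unfolding u_pt_def q_def by (simp add: lessThan_Suc_atMost)
qed

lemma u_pt_div_mod: "u n = ud (n mod q) + inverse pr * u (n div q)"
proof (cases "n = 0")
  case True
  then show ?thesis using u_pt_0 u_digit_0 by simp
next
  case False
  then have lt: "n div q < n" using q_ge_2 by simp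
  have "u n = (\<Sum>i<Suc n. ud (n div q ^ i mod q) * inverse pr ^ i)" by (rule u_pt_eq_sum) simp
  also have "\<dots> = ud (n mod q) + inverse pr * (\<Sum>i<n. ud (n div q div q ^ i mod q) * inverse pr ^ i)"
    unfolding sum.lessThan_Suc_shift sum_distrib_left
    by (simp add: div_mult2_eq algebra_simps)
  also have "(\<Sum>i<n. ud (n div q div q ^ i mod q) * inverse pr ^ i) = u (n div q)"
    using u_pt_eq_sum[OF lt] by simp
  finally show ?thesis .
qed

lemma u_pt_q_mult: "u (q * k) = inverse pr * u k"
  using u_pt_div_mod[of "q * k"] q_ge_2 u_digit_0 by simp

text \<open>Digitwise addition modulo \<open>p\<close> is addition in characteristic \<open>p\<close>.\<close>

lemma u_digit_add:
  obtains d where "d < q" "ud a + ud b = ud d"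
proof -
  define g where "g j = (a div p ^ j mod p + b div p ^ j mod p) mod p" for j
  have "\<forall>j<c. g j < p" unfolding g_def using prime_gt_0_nat[OF prime_p] by simp
  then have d: "(\<Sum>j<c. g j * p ^ j) < q" "\<forall>i<c. (\<Sum>j<c. g j * p ^ j) div p ^ i mod p = g i"
    unfolding q_def by (simp_all add: base_expansion_digits)
  have digit_sum: "(of_nat (a div p ^ j mod p) + of_nat (b div p ^ j mod p) :: 'k) = of_nat (g j)" for j
    unfolding g_def by (metis of_nat_add of_nat_mod_p)
  have "ud a + ud b = (\<Sum>j<c. (of_nat (a div p ^ j mod p) + of_nat (b div p ^ j mod p)) * \<zeta> j) * inverse pr"
    unfolding u_digit_def by (simp add: distrib_right sum.distrib)
  also have "\<dots> = (\<Sum>j<c. of_nat (g j) * \<zeta> j) * inverse pr"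
    unfolding digit_sum ..
  also have "\<dots> = ud (\<Sum>j<c. g j * p ^ j)"
    unfolding u_digit_def using d(2) by (simp cong: sum.cong_simp)
  finally have "ud a + ud b = ud (\<Sum>j<c. g j * p ^ j)" .
  then show ?thesis using d(1) that by blast
qed

lemma u_pt_add: obtains k where "u k = u n + u m"
proof -
  have "\<exists>k. u k = u n + u m"
  proof (induction "n + m" arbitrary: n m rule: less_induct)
    case less
    show ?case
    proof (cases "n = 0 \<and> m = 0")
      case True
      then show ?thesis using u_pt_0 by auto
    next
      case False
      have "n div q + m div q < n + m"
      proof (cases "n = 0")
        case True
        then have "m div q < m" using False q_ge_2 by (intro div_less_dividend) auto
        then show ?thesis using True by simp
      next
        case False
        then have "n div q < n" using q_ge_2 by (intro div_less_dividend) auto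
        moreover have "m div q \<le> m" by simp
        ultimately show ?thesis by linarith
      qed
      then obtain k' where k': "u k' = u (n div q) + u (m div q)" using less by blast
      obtain d where d: "d < q" "ud (n mod q) + ud (m mod q) = ud d" by (rule u_digit_add)
      have "u (d + q * k') = ud d + inverse pr * u k'"
        using u_pt_div_mod[of "d + q * k'"] d(1) by simp
      also have "\<dots> = u n + u m"
        using u_pt_div_mod[of n] u_pt_div_mod[of m] k' d(2) by (simp add: algebra_simps)
      finally show ?thesis by blast
    qed
  qed
  then show ?thesis using that by blast
qed

lemma u_pt_uminus: obtains k where "u k = - u n"
proof -
  have multiple: "\<exists>k. u k = of_nat i * u n" for i
  proof (induction i)
    case 0
    then show ?case using u_pt_0 by auto
  next
    case (Suc i)
    then obtain k where "u k = of_nat i * u n" by blast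
    moreover obtain k' where "u k' = u k + u n" by (rule u_pt_add)
    ultimately show ?case by (auto simp: algebra_simps)
  qed
  have "(of_nat (p - 1) :: 'k) = of_nat (p - 1 + 1) - 1" by simp
  also have "\<dots> = - 1"
    using of_nat_mod_p[of "p - 1 + 1"] prime_gt_0_nat[OF prime_p] by simp
  finally show ?thesis using multiple[of "p - 1"] that by auto
qed

lemma dilation_stable_lattice_u_pt: "dilation_stable_lattice pr u"
proof -
  have "\<exists>m. u m = u j - u k" for j k
  proof -
    obtain k' where "u k' = - u k" by (rule u_pt_uminus)
    moreover obtain m where "u m = u j + u k'" by (rule u_pt_add)
    ultimately show ?thesis by auto
  qed
  then show ?thesis unfolding dilation_stable_lattice_def using u_pt_0 u_pt_q_mult by metis
qed

end

end

section \<open>Refinements of biorthogonal translates\<close>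

definition biorthogonal_translates ::
  "'k::ab_group_add measure \<Rightarrow> (nat \<Rightarrow> 'k) \<Rightarrow> ('k \<Rightarrow> complex) \<Rightarrow> ('k \<Rightarrow> complex) \<Rightarrow> bool" where
  "biorthogonal_translates \<mu> u g gt \<longleftrightarrow>
     (\<forall>m. l2_inner \<mu> g (\<lambda>x. gt (x - u m)) = (if m = 0 then 1 else 0))"

text \<open>For refinements \<open>f\<close>, \<open>ft\<close> with masks \<open>a\<close>, \<open>b\<close> of a biorthogonal pair, this is the inner product
  of the \<open>N\<close>-th partial sums of \<open>f\<close> and of \<open>ft (\<cdot> - u k)\<close>.\<close>

definition coefficient_correlation ::
  "'k::field \<Rightarrow> (nat \<Rightarrow> 'k) \<Rightarrow> (nat \<Rightarrow> complex) \<Rightarrow> (nat \<Rightarrow> complex) \<Rightarrow> nat \<Rightarrow> nat \<Rightarrow> complex" where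
  "coefficient_correlation pr u a b k N =
     (\<Sum>j<N. \<Sum>l<N. a j * cnj (b l) * (if u j = inverse pr * u k + u l then 1 else 0))"

lemma refinement_L2:
  assumes "refinement_eq \<mu> n pr u f a g"
  shows "L2 \<mu> f"
  using assms unfolding refinement_eq_def L2_limit_def by blast

lemma biorthogonal_translates_eq_u_0:
  assumes "biorthogonal_translates \<mu> u g gt" "u m = u 0"
  shows "m = 0"
  using assms unfolding biorthogonal_translates_def by (metis zero_neq_one)

lemma l2_inner_biorthogonal_lattice:
  assumes "biorthogonal_translates \<mu> u g gt" "dilation_stable_lattice pr u"
  shows "l2_inner \<mu> g (\<lambda>x. gt (x - (inverse pr * u k + u l - u j))) =
    (if u j = inverse pr * u k + u l then 1 else 0)"
proof -
  obtain m where m: "u m = inverse pr * u k + u l - u j"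
    using assms(2) by (rule dilation_stable_lattice_affine)
  have "m = 0 \<longleftrightarrow> u j = inverse pr * u k + u l"
    using biorthogonal_translates_eq_u_0[OF assms(1), of m] assms(2) m
    unfolding dilation_stable_lattice_def by auto
  then show ?thesis using assms(1) m unfolding biorthogonal_translates_def by metis
qed

context local_field
begin

lemma integral_dilate_translate_inner:
  assumes "L2 \<mu> g" "L2 \<mu> gt"
  shows "(\<integral>x. g (inverse pr * x - v) * cnj (gt (inverse pr * x - w)) \<partial>\<mu>) =
    complex_of_real (1 / real q) * l2_inner \<mu> g (\<lambda>x. gt (x - (w - v)))"
proof -
  define \<Psi> where "\<Psi> z = g z * cnj (gt (z - (w - v)))" for z
  have "\<Psi> \<in> borel_measurable \<mu>"
    unfolding \<Psi>_def using integrable_inner_L2[OF assms(1) L2_translate[OF assms(2)]]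
    by (rule borel_measurable_integrable)
  then have meas: "(\<lambda>y. \<Psi> (y + - v)) \<in> borel_measurable \<mu>"
    using measurable_compose[OF measurable_translate] by blast
  have "(\<integral>x. g (inverse pr * x - v) * cnj (gt (inverse pr * x - w)) \<partial>\<mu>) = (\<integral>x. \<Psi> (inverse pr * x + - v) \<partial>\<mu>)"
    unfolding \<Psi>_def by (simp add: algebra_simps)
  also have "\<dots> = (1 / real q) *\<^sub>R (\<integral>y. \<Psi> (y + - v) \<partial>\<mu>)"
    using integral_dilate[OF meas] by simp
  also have "(\<integral>y. \<Psi> (y + - v) \<partial>\<mu>) = integral\<^sup>L \<mu> \<Psi>"
    by (rule integral_translate) fact
  finally show ?thesis unfolding \<Psi>_def l2_inner_def by (simp add: scaleR_conv_of_real)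
qed

lemma l2_inner_refinement_partial_sums:
  assumes g: "L2 \<mu> g" and gt: "L2 \<mu> gt" and biorth: "biorthogonal_translates \<mu> u g gt"
    and lattice: "dilation_stable_lattice pr u"
  shows "l2_inner \<mu> (\<lambda>x. of_real (sqrt (real q)) * (\<Sum>j<N. a j * g (inverse pr * x - u j)))
      (\<lambda>x. of_real (sqrt (real q)) * (\<Sum>l<N. b l * gt (inverse pr * (x - u k) - u l))) =
    coefficient_correlation pr u a b k N"
proof -
  define s where "s = complex_of_real (sqrt (real q))"
  define G where "G j x = g (inverse pr * x - u j)" for j x
  define H where "H l x = gt (inverse pr * x - (inverse pr * u k + u l))" for l x
  have s: "s * cnj s = of_nat q" unfolding s_def by (simp flip: of_real_mult)
  have integrable: "integrable \<mu> (\<lambda>x. G j x * cnj (H l x))" for j l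
    unfolding G_def H_def by (intro integrable_inner_L2 L2_dilate_translate g gt)
  have entry: "(\<integral>x. G j x * cnj (H l x) \<partial>\<mu>) =
      complex_of_real (1 / real q) * (if u j = inverse pr * u k + u l then 1 else 0)" for j l
    unfolding G_def H_def integral_dilate_translate_inner[OF g gt]
      l2_inner_biorthogonal_lattice[OF biorth lattice] ..
  have "s * (\<Sum>j<N. a j * G j x) * cnj (s * (\<Sum>l<N. b l * H l x)) =
      (\<Sum>j<N. \<Sum>l<N. (of_nat q * (a j * cnj (b l))) * (G j x * cnj (H l x)))" for x
  proof -
    have "s * (\<Sum>j<N. a j * G j x) * cnj (s * (\<Sum>l<N. b l * H l x)) =
        (s * cnj s) * ((\<Sum>j<N. a j * G j x) * (\<Sum>l<N. cnj (b l) * cnj (H l x)))"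
      by simp
    then show ?thesis unfolding s sum_product by (simp add: sum_distrib_left algebra_simps)
  qed
  moreover have "gt (inverse pr * (x - u k) - u l) = H l x" for x l
    unfolding H_def by (simp add: algebra_simps)
  ultimately have "l2_inner \<mu> (\<lambda>x. s * (\<Sum>j<N. a j * g (inverse pr * x - u j)))
      (\<lambda>x. s * (\<Sum>l<N. b l * gt (inverse pr * (x - u k) - u l))) =
    (\<Sum>j<N. \<Sum>l<N. (of_nat q * (a j * cnj (b l))) * (\<integral>x. G j x * cnj (H l x) \<partial>\<mu>))"
    unfolding l2_inner_def using integrable by (simp add: G_def)
  also have "\<dots> = coefficient_correlation pr u a b k N"
    unfolding coefficient_correlation_def entry using q_pos
    by (intro sum.cong refl) (simp flip: of_real_mult)
  finally show ?thesis unfolding s_def .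
qed

lemma l2_inner_refinements_tendsto:
  assumes g: "L2 \<mu> g" and gt: "L2 \<mu> gt" and biorth: "biorthogonal_translates \<mu> u g gt"
    and lattice: "dilation_stable_lattice pr u"
    and f: "refinement_eq \<mu> q pr u f a g" and ft: "refinement_eq \<mu> q pr u ft b gt"
  shows "coefficient_correlation pr u a b k \<longlonglongrightarrow> l2_inner \<mu> f (\<lambda>x. ft (x - u k))"
proof -
  have "L2_limit \<mu> (\<lambda>N x. of_real (sqrt (real q)) * (\<Sum>l<N. b l * gt (inverse pr * (x - u k) - u l)))
      (\<lambda>x. ft (x - u k))"
    using L2_limit_translate ft unfolding refinement_eq_def by blast
  from l2_inner_tendsto[OF f[unfolded refinement_eq_def] this]
  show ?thesis unfolding l2_inner_refinement_partial_sums[OF g gt biorth lattice] .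
qed

lemma wavelet_packets_biorthogonal:
  fixes \<omega> \<omega>t :: "nat \<Rightarrow> 'k \<Rightarrow> complex" and a b :: "nat \<Rightarrow> nat \<Rightarrow> complex"
  assumes lattice: "dilation_stable_lattice pr u"
    and L2_0: "L2 \<mu> (\<omega> 0)" "L2 \<mu> (\<omega>t 0)"
    and biorth_0: "biorthogonal_translates \<mu> u (\<omega> 0) (\<omega>t 0)"
    and rec: "\<And>r s. s \<le> q - 1 \<Longrightarrow> refinement_eq \<mu> q pr u (\<omega> (q * r + s)) (a s) (\<omega> r)"
    and rect: "\<And>r s. s \<le> q - 1 \<Longrightarrow> refinement_eq \<mu> q pr u (\<omega>t (q * r + s)) (b s) (\<omega>t r)"
    and masks: "\<And>s1 s2 k. s1 \<le> q - 1 \<Longrightarrow> s2 \<le> q - 1 \<Longrightarrow>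
       coefficient_correlation pr u (a s1) (b s2) k \<longlonglongrightarrow> (if k = 0 \<and> s1 = s2 then 1 else 0)"
    and s: "s1 \<le> q - 1" "s2 \<le> q - 1"
  shows "l2_inner \<mu> (\<omega> (q * r + s1)) (\<lambda>x. \<omega>t (q * r + s2) (x - u k)) = (if k = 0 \<and> s1 = s2 then 1 else 0)"
proof -
  have mod_q: "n mod q \<le> q - 1" and div_mod_q: "n = q * (n div q) + n mod q" for n
    using q_ge_2 by (simp_all add: less_Suc_eq_le[symmetric])
  have L2: "L2 \<mu> (\<omega> n)" "L2 \<mu> (\<omega>t n)" for n
    using refinement_L2[OF rec[OF mod_q]] refinement_L2[OF rect[OF mod_q]] div_mod_q[of n] by metis+
  have step: "l2_inner \<mu> (\<omega> (q * r + s1)) (\<lambda>x. \<omega>t (q * r + s2) (x - u k)) = (if k = 0 \<and> s1 = s2 then 1 else 0)"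
    if "biorthogonal_translates \<mu> u (\<omega> r) (\<omega>t r)" "s1 \<le> q - 1" "s2 \<le> q - 1" for r s1 s2 k
    using LIMSEQ_unique[OF l2_inner_refinements_tendsto[OF L2 that(1) lattice rec rect] masks] that(2,3)
    by simp
  have "biorthogonal_translates \<mu> u (\<omega> n) (\<omega>t n)" for n
  proof (induction n rule: less_induct)
    case (less n)
    show ?case
    proof (cases "n = 0")
      case False
      then have "n div q < n" using q_ge_2 by simp
      then show ?thesis
        using step[OF less.IH mod_q mod_q] div_mod_q[of n] unfolding biorthogonal_translates_def by metis
    qed (use biorth_0 in simp)
  qed
  then show ?thesis using step s by blast
qed

lemma scaling_wavelet_biorthogonal:
  fixes \<phi> \<phi>t :: "'k \<Rightarrow> complex" and \<psi> \<psi>t :: "nat \<Rightarrow> 'k \<Rightarrow> complex"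
  assumes lattice: "dilation_stable_lattice pr u"
    and L2: "L2 \<mu> \<phi>t" "\<forall>l. 1 \<le> l \<and> l \<le> q - 1 \<longrightarrow> L2 \<mu> (\<psi> l)"
    and biorth1: "\<forall>k. l2_inner \<mu> \<phi> (\<lambda>x. \<phi>t (x - u k)) = (if k = 0 then 1 else 0)"
    and biorth2: "\<forall>k l. 1 \<le> l \<and> l \<le> q - 1 \<longrightarrow> l2_inner \<mu> \<phi> (\<lambda>x. \<psi>t l (x - u k)) = 0"
    and biorth3: "\<forall>k l. 1 \<le> l \<and> l \<le> q - 1 \<longrightarrow> l2_inner \<mu> \<phi>t (\<lambda>x. \<psi> l (x - u k)) = 0"
    and biorth4: "\<forall>k l l'. 1 \<le> l \<and> l \<le> q - 1 \<and> 1 \<le> l' \<and> l' \<le> q - 1 \<longrightarrow>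
                    l2_inner \<mu> (\<psi> l) (\<lambda>x. \<psi>t l' (x - u k)) = (if l = l' \<and> k = 0 then 1 else 0)"
    and s: "s1 \<le> q - 1" "s2 \<le> q - 1"
  shows "l2_inner \<mu> (if s1 = 0 then \<phi> else \<psi> s1) (\<lambda>x. (if s2 = 0 then \<phi>t else \<psi>t s2) (x - u k)) =
    (if k = 0 \<and> s1 = s2 then 1 else 0)"
proof -
  consider "s1 = 0" | "s1 \<noteq> 0" "s2 = 0" | "s1 \<noteq> 0" "s2 \<noteq> 0" by blast
  then show ?thesis
  proof cases
    case 2
    obtain k' where k': "u k' = - u k" using lattice by (rule dilation_stable_lattice_uminus)
    have "l2_inner \<mu> (\<psi> s1) (\<lambda>x. \<phi>t (x - u k)) = cnj (l2_inner \<mu> \<phi>t (\<lambda>x. \<psi> s1 (x - u k')))"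
      using l2_inner_translate_swap[of "\<psi> s1" \<phi>t "u k"] L2 s 2 k' by simp
    then show ?thesis using biorth3 s 2 by simp
  qed (use biorth1 biorth2 biorth4 s in auto)
qed

lemma mask_correlation_tendsto_delta:
  fixes \<phi> \<phi>t :: "'k \<Rightarrow> complex" and \<psi> \<psi>t :: "nat \<Rightarrow> 'k \<Rightarrow> complex" and a b :: "nat \<Rightarrow> nat \<Rightarrow> complex"
  assumes lattice: "dilation_stable_lattice pr u"
    and L2: "L2 \<mu> \<phi>" "L2 \<mu> \<phi>t" "\<forall>l. 1 \<le> l \<and> l \<le> q - 1 \<longrightarrow> L2 \<mu> (\<psi> l)"
    and refine_\<phi>: "refinement_eq \<mu> q pr u \<phi> (a 0) \<phi>" "refinement_eq \<mu> q pr u \<phi>t (b 0) \<phi>t"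
    and refine_\<psi>: "\<forall>l. 1 \<le> l \<and> l \<le> q - 1 \<longrightarrow>
      refinement_eq \<mu> q pr u (\<psi> l) (a l) \<phi> \<and> refinement_eq \<mu> q pr u (\<psi>t l) (b l) \<phi>t"
    and biorth1: "\<forall>k. l2_inner \<mu> \<phi> (\<lambda>x. \<phi>t (x - u k)) = (if k = 0 then 1 else 0)"
    and biorth2: "\<forall>k l. 1 \<le> l \<and> l \<le> q - 1 \<longrightarrow> l2_inner \<mu> \<phi> (\<lambda>x. \<psi>t l (x - u k)) = 0"
    and biorth3: "\<forall>k l. 1 \<le> l \<and> l \<le> q - 1 \<longrightarrow> l2_inner \<mu> \<phi>t (\<lambda>x. \<psi> l (x - u k)) = 0"
    and biorth4: "\<forall>k l l'. 1 \<le> l \<and> l \<le> q - 1 \<and> 1 \<le> l' \<and> l' \<le> q - 1 \<longrightarrow>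
                    l2_inner \<mu> (\<psi> l) (\<lambda>x. \<psi>t l' (x - u k)) = (if l = l' \<and> k = 0 then 1 else 0)"
    and s: "s1 \<le> q - 1" "s2 \<le> q - 1"
  shows "coefficient_correlation pr u (a s1) (b s2) k \<longlonglongrightarrow> (if k = 0 \<and> s1 = s2 then 1 else 0)"
proof -
  define F where "F s = (if s = 0 then \<phi> else \<psi> s)" for s
  define Ft where "Ft s = (if s = 0 then \<phi>t else \<psi>t s)" for s
  have "biorthogonal_translates \<mu> u \<phi> \<phi>t"
    using biorth1 unfolding biorthogonal_translates_def .
  moreover have "refinement_eq \<mu> q pr u (F s) (a s) \<phi>" "refinement_eq \<mu> q pr u (Ft s) (b s) \<phi>t"
    if "s \<le> q - 1" for s
    using refine_\<phi> refine_\<psi> that unfolding F_def Ft_def by auto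
  ultimately have "coefficient_correlation pr u (a s1) (b s2) k \<longlonglongrightarrow> l2_inner \<mu> (F s1) (\<lambda>x. Ft s2 (x - u k))"
    using l2_inner_refinements_tendsto[OF L2(1,2) _ lattice] s by blast
  moreover have "l2_inner \<mu> (F s1) (\<lambda>x. Ft s2 (x - u k)) = (if k = 0 \<and> s1 = s2 then 1 else 0)"
    unfolding F_def Ft_def
    by (rule scaling_wavelet_biorthogonal[OF lattice L2(2,3) biorth1 biorth2 biorth3 biorth4 s])
  ultimately show ?thesis by simp
qed

end

theorem theorem3p3:
  fixes absv :: "'k::field \<Rightarrow> real" and \<mu> :: "'k measure"
    and p c :: nat and pr :: 'k and \<zeta> :: "nat \<Rightarrow> 'k"
    and a a_t :: "nat \<Rightarrow> nat \<Rightarrow> complex"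
    and \<phi> \<phi>t :: "'k \<Rightarrow> complex" and \<psi> \<psi>t :: "nat \<Rightarrow> 'k \<Rightarrow> complex"
    and \<omega> \<omega>t :: "nat \<Rightarrow> 'k \<Rightarrow> complex"
  defines "q \<equiv> p ^ c"
  defines "u \<equiv> u_pt p c \<zeta> pr"
  assumes K: "local_field_pc absv \<mu> p c pr"
    and zeta: "residue_basis absv p c \<zeta>"
    and coeff_l2: "\<forall>s<q. summable (\<lambda>k. (cmod (a s k))\<^sup>2) \<and> summable (\<lambda>k. (cmod (a_t s k))\<^sup>2)"
    and L2_fun: "L2 \<mu> \<phi> \<and> L2 \<mu> \<phi>t \<and> (\<forall>l. 1 \<le> l \<and> l \<le> q - 1 \<longrightarrow> L2 \<mu> (\<psi> l) \<and> L2 \<mu> (\<psi>t l))"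
    and refine_phi: "refinement_eq \<mu> q pr u \<phi> (a 0) \<phi>"
    and refine_phit: "refinement_eq \<mu> q pr u \<phi>t (a_t 0) \<phi>t"
    and refine_psi: "\<forall>l. 1 \<le> l \<and> l \<le> q - 1 \<longrightarrow>
                        refinement_eq \<mu> q pr u (\<psi> l) (a l) \<phi> \<and>
                        refinement_eq \<mu> q pr u (\<psi>t l) (a_t l) \<phi>t"
    and MRA_phi: "\<exists>V. MRA \<mu> pr u V \<phi> \<and>
                    (\<exists>W. closed_subspace \<mu> W \<and>
                         V 0 \<inter> W = {f. L2 \<mu> f \<and> (AE x in \<mu>. f x = 0)} \<and>
                         V 1 = {(\<lambda>x. g x + h x) | g h. g \<in> V 0 \<and> h \<in> W} \<and>
                         riesz_basis \<mu> ({1..q - 1} \<times> UNIV) (\<lambda>(l, k) x. \<psi> l (x - u k)) W)"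
    and MRA_phit: "\<exists>V. MRA \<mu> pr u V \<phi>t"
    and biorth1: "\<forall>k. l2_inner \<mu> \<phi> (\<lambda>x. \<phi>t (x - u k)) = (if k = 0 then 1 else 0)"
    and biorth2: "\<forall>k l. 1 \<le> l \<and> l \<le> q - 1 \<longrightarrow> l2_inner \<mu> \<phi> (\<lambda>x. \<psi>t l (x - u k)) = 0"
    and biorth3: "\<forall>k l. 1 \<le> l \<and> l \<le> q - 1 \<longrightarrow> l2_inner \<mu> \<phi>t (\<lambda>x. \<psi> l (x - u k)) = 0"
    and biorth4: "\<forall>k l l'. 1 \<le> l \<and> l \<le> q - 1 \<and> 1 \<le> l' \<and> l' \<le> q - 1 \<longrightarrow>
                    l2_inner \<mu> (\<psi> l) (\<lambda>x. \<psi>t l' (x - u k)) = (if l = l' \<and> k = 0 then 1 else 0)"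
    and omega0: "\<omega> 0 = \<phi>" and omegat0: "\<omega>t 0 = \<phi>t"
    and omega_rec: "\<forall>r s. s \<le> q - 1 \<longrightarrow> refinement_eq \<mu> q pr u (\<omega> (q * r + s)) (a s) (\<omega> r)"
    and omegat_rec: "\<forall>r s. s \<le> q - 1 \<longrightarrow> refinement_eq \<mu> q pr u (\<omega>t (q * r + s)) (a_t s) (\<omega>t r)"
  shows "\<forall>s1 s2 r k. s1 \<le> q - 1 \<and> s2 \<le> q - 1 \<longrightarrow>
           l2_inner \<mu> (\<omega> (q * r + s1)) (\<lambda>x. \<omega>t (q * r + s2) (x - u k)) =
             (if k = 0 \<and> s1 = s2 then 1 else 0)"
proof -
  interpret K: local_field absv \<mu> p c pr by (rule local_field.intro[OF K])
  have q_eq: "q = K.q" unfolding q_def K.q_def ..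
  have lattice: "dilation_stable_lattice pr u"
    unfolding u_def by (rule K.dilation_stable_lattice_u_pt)
  have biorth_0: "biorthogonal_translates \<mu> u (\<omega> 0) (\<omega>t 0)"
    using biorth1 omega0 omegat0 unfolding biorthogonal_translates_def by simp
  have masks: "coefficient_correlation pr u (a s1) (a_t s2) k \<longlonglongrightarrow> (if k = 0 \<and> s1 = s2 then 1 else 0)"
    if "s1 \<le> K.q - 1" "s2 \<le> K.q - 1" for s1 s2 k
    by (rule K.mask_correlation_tendsto_delta[OF lattice _ _ _ _ _ _ biorth1 _ _ _ that])
      (use L2_fun refine_phi refine_phit refine_psi biorth2 biorth3 biorth4 in \<open>simp_all add: q_eq\<close>)
  have "refinement_eq \<mu> K.q pr u (\<omega> (K.q * r + s)) (a s) (\<omega> r)"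
    "refinement_eq \<mu> K.q pr u (\<omega>t (K.q * r + s)) (a_t s) (\<omega>t r)" if "s \<le> K.q - 1" for r s
    using omega_rec omegat_rec that unfolding q_eq by blast+
  from K.wavelet_packets_biorthogonal[OF lattice _ _ biorth_0 this masks]
  show ?thesis using L2_fun omega0 omegat0 unfolding q_eq by blast
qed

end
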